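(* Consider the age-structured multispecies map $h$ described in the context, and suppose $\bm{y}^\ast=h(\bm{y}^\ast)$ is an equilibrium whose adult part is an interior equilibrium $\bm{x}^\ast=(y^\ast_{\delta_1\mid 1},\dots,y^\ast_{\delta_m\mid m})^\top>\bm{0}$ (all entries positive). Let $\bm{J}^\ast$ be the $n\times n$ Jacobian of $h$ at $\bm{y}^\ast$, $n=m+\sum_{i}\delta_i$, and let a permutation bring $\bm{J}^\ast$ to lower block-triangular form whose diagonal blocks $\bm{J}^\ast(\alpha_w,\alpha_w)$, $w=1,\dots,r$, are square and either irreducible or a $1\times 1$ zero, where $\alpha_1,\dots,\alpha_r$ is the corresponding partition of the index set. For each $w$ let $\mathcal{D}_w\subseteq\mathcal{M}$ be the set of species having nodes (age classes) in $\alpha_w$. If for every $w\in\{1,\dots,r\}$ and every $i\in\mathcal{D}_w$ $$\Bigl\{\Bigl|G_i(\bm{x}^\ast)+x_i^\ast\tfrac{\partial G_i}{\partial x_i}(\bm{x}^\ast)\Bigr| + \sum_{j\in\mathcal{D}_w\setminus\{i\}}\Bigl|x_i^\ast\tfrac{\partial G_i}{\partial x_j}(\bm{x}^\ast)\Bigr|\Bigr\}\prod_{a=0}^{\delta_i-1}\sigma_{a\mid i} \;<\; z_i,$$ then $\rho(\bm{J}^\ast)<1$, i.e. the equilibrium is locally asymptotically stable.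
   Context: Let $m\ge 1$ and $\mathcal{M}=\{1,\dots,m\}$. For each species $i\in\mathcal{M}$: a maturation delay $\delta_i\in\{0,1,2,\dots\}$; immature survival probabilities $\sigma_{a\mid i}\in(0,1]$ for $a=0,\dots,\delta_i-1$; an adult survival probability $\sigma_{\delta_i\mid i}\in(0,1)$ with adult mortality $z_i=1-\sigma_{\delta_i\mid i}$; an empty product $\prod_{a=0}^{-1}$ equals $1$. Each $G_i:\mathbb{R}^m\to\mathbb{R}$ is a differentiable per capita growth function. The state is $\bm{y}=(y_{a\mid i})$, indexed by $i\in\mathcal{M}$, $a\in\{0,\dots,\delta_i\}$ (ordered species by species), of dimension $n=m+\sum_i\delta_i$; the adult vector is $\bm{x}=(y_{\delta_1\mid 1},\dots,y_{\delta_m\mid m})^\top$. The map $h:\mathbb{R}^n\to\mathbb{R}^n$ is: if $\delta_i>0$, $h_{0\mid i}(\bm{y})=G_i(\bm{x})\,y_{\delta_i\mid i}$, $h_{a\mid i}(\bm{y})=\sigma_{a-1\mid i}y_{a-1\mid i}$ for $1\le a\le\delta_i-1$, and $h_{\delta_i\mid i}(\bm{y})=\sigma_{\delta_i-1\mid i}y_{\delta_i-1\mid i}+\sigma_{\delta_i\mid i}y_{\delta_i\mid i}$; if $\delta_i=0$, $h_{0\mid i}(\bm{y})=\sigma_{0\mid i}y_{0\mid i}+G_i(\bm{x})y_{0\mid i}$. (This is equivalent to the delay system $x_i(t+1)=\sigma_{\delta_i\mid i}x_i(t)+x_i(t-\delta_i)G_i(\bm{x}(t-\delta_i))\prod_{a=0}^{\delta_i-1}\sigma_{a\mid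 i}$.) The Jacobian $\bm{J}^\ast$ at an equilibrium $\bm{y}^\ast$ has entries $\partial h_{a\mid i}/\partial y_{b\mid j}$ evaluated at $\bm{y}^\ast$; in particular the entry of row $(0\mid i)$, column $(\delta_i\mid i)$ is $G_i(\bm{x}^\ast)+x_i^\ast\partial G_i/\partial x_i(\bm{x}^\ast)$ (plus $\sigma_{0\mid i}$ if $\delta_i=0$) and the entry of row $(0\mid i)$, column $(\delta_j\mid j)$, $j\neq i$, is $x_i^\ast\partial G_i/\partial x_j(\bm{x}^\ast)$. $\rho(\cdot)$ denotes spectral radius. An equilibrium is called locally asymptotically stable if $\rho(\bm{J}^\ast)<1$. *)

theory Defs
  imports "HOL-Analysis.Analysis"
begin

text \<open>Species are the elements of a finite type 'm (so m = CARD('m) \<ge> 1).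
  A node (age class) is a pair (i, a) with a \<le> \<delta> i.  States are functions on nodes.\<close>

definition nodes :: "('m::finite \<Rightarrow> nat) \<Rightarrow> ('m \<times> nat) set" where
  "nodes \<delta> = {(i, a). a \<le> \<delta> i}"

definition adults :: "('m::finite \<Rightarrow> nat) \<Rightarrow> ('m \<times> nat \<Rightarrow> real) \<Rightarrow> real ^ 'm" where
  "adults \<delta> y = (\<chi> i. y (i, \<delta> i))"

text \<open>The map h (components outside the node set are set to 0).\<close>
definition hmap :: "('m::finite \<Rightarrow> nat) \<Rightarrow> ('m \<Rightarrow> nat \<Rightarrow> real) \<Rightarrow> ('m \<Rightarrow> real ^ 'm \<Rightarrow> real)
    \<Rightarrow> ('m \<times> nat \<Rightarrow> real) \<Rightarrow> ('m \<times> nat \<Rightarrow> real)" where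
  "hmap \<delta> \<sigma> G y = (\<lambda>(i, a).
     if 0 < \<delta> i then
       (if a = 0 then G i (adults \<delta> y) * y (i, \<delta> i)
        else if a < \<delta> i then \<sigma> i (a - 1) * y (i, a - 1)
        else if a = \<delta> i then \<sigma> i (a - 1) * y (i, a - 1) + \<sigma> i (\<delta> i) * y (i, \<delta> i)
        else 0)
     else
       (if a = 0 then \<sigma> i 0 * y (i, 0) + G i (adults \<delta> y) * y (i, 0) else 0))"

definition jacobian :: "('m::finite \<Rightarrow> nat) \<Rightarrow> ('m \<Rightarrow> nat \<Rightarrow> real) \<Rightarrow> ('m \<Rightarrow> real ^ 'm \<Rightarrow> real)
    \<Rightarrow> ('m \<times> nat \<Rightarrow> real) \<Rightarrow> ('m \<times> nat) \<Rightarrow> ('m \<times> nat) \<Rightarrow> real" where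
  "jacobian \<delta> \<sigma> G y p q = deriv (\<lambda>t. hmap \<delta> \<sigma> G (y(q := t)) p) (y q)"

definition pderiv_at :: "(real ^ 'm::finite \<Rightarrow> real) \<Rightarrow> real ^ 'm \<Rightarrow> 'm \<Rightarrow> real" where
  "pderiv_at f x j = frechet_derivative f (at x) (axis j 1)"

definition is_eigenvalue_on :: "'a set \<Rightarrow> ('a \<Rightarrow> 'a \<Rightarrow> real) \<Rightarrow> complex \<Rightarrow> bool" where
  "is_eigenvalue_on N A c \<longleftrightarrow>
     (\<exists>v :: 'a \<Rightarrow> complex. (\<exists>p\<in>N. v p \<noteq> 0) \<and>
        (\<forall>p\<in>N. (\<Sum>q\<in>N. complex_of_real (A p q) * v q) = c * v p))"

definition spectral_radius_on :: "'a set \<Rightarrow> ('a \<Rightarrow> 'a \<Rightarrow> real) \<Rightarrow> real" where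
  "spectral_radius_on N A = Max {cmod c | c. is_eigenvalue_on N A c}"

text \<open>Irreducibility of the principal submatrix A(S,S): its directed graph
  (edge p \<rightarrow> q iff A p q \<noteq> 0, p q \<in> S) is strongly connected
  (for a 1x1 block this means the entry is nonzero).\<close>
definition irreducible_block :: "'a set \<Rightarrow> ('a \<Rightarrow> 'a \<Rightarrow> real) \<Rightarrow> bool" where
  "irreducible_block S A \<longleftrightarrow>
     (\<forall>p\<in>S. \<forall>q\<in>S. (p, q) \<in> {(u, v). u \<in> S \<and> v \<in> S \<and> A u v \<noteq> 0}\<^sup>+)"

end

theory Submission
  imports Defs "Jordan_Normal_Form.Spectral_Radius"
begin

(* Every eigenvalue of a block lower-triangular matrix is an eigenvalue of one of its diagonal
   blocks, so it suffices to bound the eigenvalues of each block.  On a block, the hypothesis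
   leaves room for positive node weights, equal to 1 on adult classes and built along the
   juvenile chain of each species from the survival products, for which every weighted absolute
   row sum of the block is strictly below the weight of its row; hence every eigenvalue has
   modulus below 1. *)

lemma is_eigenvalue_on_cong:
  assumes "\<And>p q. p \<in> N \<Longrightarrow> q \<in> N \<Longrightarrow> A p q = B p q"
  shows "is_eigenvalue_on N A c \<longleftrightarrow> is_eigenvalue_on N B c"
proof -
  have "(\<Sum>q\<in>N. complex_of_real (A p q) * v q) = (\<Sum>q\<in>N. complex_of_real (B p q) * v q)"
    if "p \<in> N" for p v using assms that by (intro sum.cong) auto
  then show ?thesis unfolding is_eigenvalue_on_def by auto
qed

lemma is_eigenvalue_on_reindexI:
  assumes f: "bij_betw f M N" and ev: "is_eigenvalue_on N A c"
  shows "is_eigenvalue_on M (\<lambda>k l. A (f k) (f l)) c"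
proof -
  obtain v where nz: "\<exists>p\<in>N. v p \<noteq> 0"
    and eq: "\<forall>p\<in>N. (\<Sum>q\<in>N. complex_of_real (A p q) * v q) = c * v p"
    using ev unfolding is_eigenvalue_on_def by blast
  have "\<exists>k\<in>M. v (f k) \<noteq> 0"
    using nz f by (metis bij_betw_imp_surj_on imageE)
  moreover have "(\<Sum>l\<in>M. complex_of_real (A (f k) (f l)) * v (f l)) = c * v (f k)" if "k \<in> M" for k
    using sum.reindex_bij_betw[OF f, of "\<lambda>q. complex_of_real (A (f k) q) * v q"] eq that f
    by (simp add: bij_betw_apply)
  ultimately show ?thesis
    unfolding is_eigenvalue_on_def by (intro exI[of _ "v \<circ> f"]) auto
qed

lemma is_eigenvalue_on_reindex:
  assumes f: "bij_betw f M N"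
  shows "is_eigenvalue_on N A c \<longleftrightarrow> is_eigenvalue_on M (\<lambda>k l. A (f k) (f l)) c"
proof
  let ?g = "inv_into M f"
  assume "is_eigenvalue_on M (\<lambda>k l. A (f k) (f l)) c"
  then have "is_eigenvalue_on N (\<lambda>p q. A (f (?g p)) (f (?g q))) c"
    using is_eigenvalue_on_reindexI[OF bij_betw_inv_into[OF f]] by blast
  moreover have "f (?g p) = p" if "p \<in> N" for p
    using f that by (simp add: bij_betw_inv_into_right)
  ultimately show "is_eigenvalue_on N A c"
    using is_eigenvalue_on_cong[of N A "\<lambda>p q. A (f (?g p)) (f (?g q))"] by auto
qed (rule is_eigenvalue_on_reindexI[OF f])

lemma is_eigenvalue_on_atLeast0LessThan_iff_spectrum:
  "is_eigenvalue_on {0..<n} A c \<longleftrightarrow> c \<in> spectrum (mat n n (\<lambda>(k, l). complex_of_real (A k l)))"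
  (is "_ \<longleftrightarrow> c \<in> spectrum ?M")
proof -
  have row: "(?M *\<^sub>v vec n v) $ k = (\<Sum>l\<in>{0..<n}. complex_of_real (A k l) * v l)" if "k < n" for v k
    using that by (simp add: scalar_prod_def)
  show ?thesis
  proof
    assume "is_eigenvalue_on {0..<n} A c"
    then obtain v where nz: "\<exists>k\<in>{0..<n}. v k \<noteq> 0"
      and eq: "\<forall>k\<in>{0..<n}. (\<Sum>l\<in>{0..<n}. complex_of_real (A k l) * v l) = c * v k"
      unfolding is_eigenvalue_on_def by blast
    have "vec n v \<noteq> 0\<^sub>v n" using nz by (metis atLeastLessThan_iff index_vec index_zero_vec(1))
    moreover have "?M *\<^sub>v vec n v = c \<cdot>\<^sub>v vec n v"
      using row eq by (intro eq_vecI) auto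
    ultimately show "c \<in> spectrum ?M"
      unfolding spectrum_def eigenvalue_def eigenvector_def by (auto intro!: exI[of _ "vec n v"])
  next
    assume "c \<in> spectrum ?M"
    then obtain w where w: "w \<in> carrier_vec n" "w \<noteq> 0\<^sub>v n" "?M *\<^sub>v w = c \<cdot>\<^sub>v w"
      unfolding spectrum_def eigenvalue_def eigenvector_def by auto
    have wv: "vec n (\<lambda>k. w $ k) = w" using w(1) by auto
    have "\<exists>k\<in>{0..<n}. w $ k \<noteq> 0"
    proof (rule ccontr)
      assume "\<not> (\<exists>k\<in>{0..<n}. w $ k \<noteq> 0)"
      then have "w = 0\<^sub>v n" using w(1) by (intro eq_vecI) auto
      with w(2) show False ..
    qed
    moreover have "(\<Sum>l\<in>{0..<n}. complex_of_real (A k l) * w $ l) = c * w $ k" if "k < n" for k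
    proof -
      have "(\<Sum>l\<in>{0..<n}. complex_of_real (A k l) * w $ l) = (?M *\<^sub>v w) $ k"
        using row[of k "\<lambda>k. w $ k"] that unfolding wv by simp
      also have "\<dots> = c * w $ k" using w(1,3) that by simp
      finally show ?thesis .
    qed
    ultimately show "is_eigenvalue_on {0..<n} A c"
      unfolding is_eigenvalue_on_def by (intro exI[of _ "\<lambda>k. w $ k"]) auto
  qed
qed

lemma eigenvalues_on_finite_nonempty:
  assumes "finite N" and "N \<noteq> {}"
  shows "finite {c. is_eigenvalue_on N A c}" and "{c. is_eigenvalue_on N A c} \<noteq> {}"
proof -
  obtain f where f: "bij_betw f {0..<card N} N"
    using ex_bij_betw_nat_finite[OF assms(1)] by blast
  define M where "M = mat (card N) (card N) (\<lambda>(k, l). complex_of_real (A (f k) (f l)))"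
  have "{c. is_eigenvalue_on N A c} = spectrum M"
    unfolding M_def is_eigenvalue_on_reindex[OF f] is_eigenvalue_on_atLeast0LessThan_iff_spectrum by simp
  moreover have "M \<in> carrier_mat (card N) (card N)" and "card N > 0"
    using assms by (auto simp: M_def card_gt_0_iff)
  ultimately show "finite {c. is_eigenvalue_on N A c}" and "{c. is_eigenvalue_on N A c} \<noteq> {}"
    using card_finite_spectrum(1) spectrum_non_empty by auto
qed

lemma spectral_radius_on_less:
  assumes "finite N" and "N \<noteq> {}" and "\<And>c. is_eigenvalue_on N A c \<Longrightarrow> cmod c < b"
  shows "spectral_radius_on N A < b"
proof -
  have "{cmod c | c. is_eigenvalue_on N A c} = cmod ` {c. is_eigenvalue_on N A c}" by auto
  then have "spectral_radius_on N A \<in> cmod ` {c. is_eigenvalue_on N A c}"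
    unfolding spectral_radius_on_def using eigenvalues_on_finite_nonempty[OF assms(1,2)]
    by (metis Max_in finite_imageI image_is_empty)
  then show ?thesis using assms(3) by auto
qed

lemma is_eigenvalue_on_block_lower_triangular:
  fixes \<alpha> :: "nat \<Rightarrow> 'a set"
  assumes fin: "finite N" and cover: "(\<Union>w<r. \<alpha> w) = N"
    and tri: "\<And>u w p q. u < w \<Longrightarrow> w < r \<Longrightarrow> p \<in> \<alpha> u \<Longrightarrow> q \<in> \<alpha> w \<Longrightarrow> A p q = 0"
    and ev: "is_eigenvalue_on N A c"
  obtains w where "w < r" and "is_eigenvalue_on (\<alpha> w) A c"
  \<comment> \<open>restrict an eigenvector to the first block on which it does not vanish\<close>
proof -
  obtain v where nz: "\<exists>p\<in>N. v p \<noteq> 0"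
    and eq: "\<forall>p\<in>N. (\<Sum>q\<in>N. complex_of_real (A p q) * v q) = c * v p"
    using ev unfolding is_eigenvalue_on_def by blast
  define W where "W = {w. w < r \<and> (\<exists>p\<in>\<alpha> w. v p \<noteq> 0)}"
  have "W \<noteq> {}" using nz cover unfolding W_def by blast
  define w0 where "w0 = (LEAST w. w \<in> W)"
  have "w0 \<in> W" unfolding w0_def using \<open>W \<noteq> {}\<close> by (auto intro: LeastI)
  then have w0r: "w0 < r" and nz0: "\<exists>p\<in>\<alpha> w0. v p \<noteq> 0" unfolding W_def by auto
  have below: "v q = 0" if "w < w0" "q \<in> \<alpha> w" for w q
    using that w0r not_less_Least[of w "\<lambda>w. w \<in> W"] unfolding w0_def W_def by auto
  have sub: "\<alpha> w0 \<subseteq> N" using cover w0r by auto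
  have "(\<Sum>q\<in>\<alpha> w0. complex_of_real (A p q) * v q) = c * v p" if p: "p \<in> \<alpha> w0" for p
  proof -
    have "(\<Sum>q\<in>N. complex_of_real (A p q) * v q) = (\<Sum>q\<in>\<alpha> w0. complex_of_real (A p q) * v q)"
    proof (rule sum.mono_neutral_right[OF fin sub], rule ballI)
      fix q assume q: "q \<in> N - \<alpha> w0"
      then obtain w where "w < r" "q \<in> \<alpha> w" "w \<noteq> w0" using cover by auto
      then have "v q = 0 \<or> A p q = 0"
        using below tri[OF _ _ p] w0r by (metis linorder_neqE_nat)
      then show "complex_of_real (A p q) * v q = 0" by auto
    qed
    then show ?thesis using eq p sub by auto
  qed
  with nz0 have "is_eigenvalue_on (\<alpha> w0) A c" unfolding is_eigenvalue_on_def by blast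
  with w0r that show thesis by blast
qed

lemma norm_eigenvalue_less_one_by_row_weights:
  fixes A :: "'a \<Rightarrow> 'a \<Rightarrow> real" and v :: "'a \<Rightarrow> real"
  assumes fin: "finite S" and ev: "is_eigenvalue_on S A c"
    and pos: "\<And>p. p \<in> S \<Longrightarrow> 0 < v p"
    and rows: "\<And>p. p \<in> S \<Longrightarrow> (\<Sum>q\<in>S. \<bar>A p q\<bar> * v q) < v p"
  shows "cmod c < 1"
proof -
  obtain u where nz: "\<exists>p\<in>S. u p \<noteq> 0"
    and eq: "\<forall>p\<in>S. (\<Sum>q\<in>S. complex_of_real (A p q) * u q) = c * u p"
    using ev unfolding is_eigenvalue_on_def by blast
  \<comment> \<open>evaluate the eigenvalue equation at a node maximising \<open>|u p| / v p\<close>\<close>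
  define ratio where "ratio p = cmod (u p) / v p" for p
  obtain p0 where p0: "p0 \<in> S" and max: "\<And>q. q \<in> S \<Longrightarrow> ratio q \<le> ratio p0"
    using Max_in[of "ratio ` S"] Max_ge[of "ratio ` S"] fin nz by (metis empty_iff finite_imageI image_iff image_is_empty)
  define M where "M = ratio p0"
  have bnd: "cmod (u q) \<le> M * v q" if "q \<in> S" for q
    using max[OF that] pos[OF that] unfolding M_def ratio_def by (simp add: pos_divide_le_eq)
  obtain p1 where "p1 \<in> S" "u p1 \<noteq> 0" using nz by auto
  then have "0 < M" using max[of p1] pos[of p1] unfolding M_def ratio_def
    by (smt (verit) divide_pos_pos zero_less_norm_iff)
  have "cmod c * cmod (u p0) = cmod (\<Sum>q\<in>S. complex_of_real (A p0 q) * u q)"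
    using eq p0 by (simp add: norm_mult)
  also have "\<dots> \<le> (\<Sum>q\<in>S. \<bar>A p0 q\<bar> * cmod (u q))"
    by (rule order_trans[OF norm_sum]) (simp add: norm_mult)
  also have "\<dots> \<le> M * (\<Sum>q\<in>S. \<bar>A p0 q\<bar> * v q)"
    unfolding sum_distrib_left using bnd
    by (intro sum_mono) (metis abs_ge_zero mult.left_commute mult_left_mono)
  also have "\<dots> < M * v p0" using rows[OF p0] \<open>0 < M\<close> by simp
  also have "\<dots> = cmod (u p0)" using pos[OF p0] unfolding M_def ratio_def by simp
  finally have "cmod c * cmod (u p0) < 1 * cmod (u p0)" by simp
  then show ?thesis by (metis mult_less_cancel_right norm_ge_zero not_less)
qed

definition birth_partial ::
    "('m::finite \<Rightarrow> nat) \<Rightarrow> ('m \<Rightarrow> real ^ 'm \<Rightarrow> real) \<Rightarrow> ('m \<times> nat \<Rightarrow> real) \<Rightarrow> 'm \<Rightarrow> 'm \<Rightarrow> real" where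
  "birth_partial \<delta> G y i j =
     y (i, \<delta> i) * pderiv_at (G i) (adults \<delta> y) j + (if j = i then G i (adults \<delta> y) else 0)"

lemma has_real_derivative_fun_upd:
  "((\<lambda>t. (y(q := t)) p) has_real_derivative (if q = p then 1 else 0)) (at s)"
  by (cases "q = p") auto

lemma has_real_derivative_if_const:
  assumes "P \<Longrightarrow> (f has_real_derivative f') F"
  shows "((\<lambda>t. if P then f t else 0) has_real_derivative (if P then f' else 0)) F"
  using assms by (cases P) auto

lemma adults_fun_upd:
  "adults \<delta> (y(q := t)) = adults \<delta> y + (t - y q) *\<^sub>R (if snd q = \<delta> (fst q) then axis (fst q) 1 else 0)"
  unfolding adults_def by (cases q) (auto simp: Finite_Cartesian_Product.vec_eq_iff axis_def)

lemma has_real_derivative_G_adults: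
  fixes G :: "real ^ 'm::finite \<Rightarrow> real"
  assumes "G differentiable (at (adults \<delta> y))"
  shows "((\<lambda>t. G (adults \<delta> (y(q := t)))) has_real_derivative
           (if snd q = \<delta> (fst q) then pderiv_at G (adults \<delta> y) (fst q) else 0)) (at (y q))"
proof -
  define e :: "real ^ 'm" where "e = (if snd q = \<delta> (fst q) then axis (fst q) 1 else 0)"
  define F where "F = frechet_derivative G (at (adults \<delta> y))"
  have G': "(G has_derivative F) (at (adults \<delta> y + (y q - y q) *\<^sub>R e))"
    using assms unfolding F_def by (simp add: frechet_derivative_works)
  have path: "((\<lambda>t. adults \<delta> y + (t - y q) *\<^sub>R e) has_derivative (\<lambda>h. h *\<^sub>R e)) (at (y q))"
    by (auto intro!: derivative_eq_intros)
  have "((\<lambda>t. G (adults \<delta> y + (t - y q) *\<^sub>R e)) has_derivative (\<lambda>h. F (h *\<^sub>R e))) (at (y q))"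
    using diff_chain_at[OF path G'] by (simp add: o_def)
  moreover have "linear F" using assms unfolding F_def
    by (simp add: frechet_derivative_works has_derivative_linear)
  moreover have "(\<lambda>h. F (h *\<^sub>R e)) = (*) (F e)"
    using \<open>linear F\<close> by (auto simp: linear_cmul)
  ultimately have "((\<lambda>t. G (adults \<delta> (y(q := t)))) has_real_derivative F e) (at (y q))"
    unfolding has_field_derivative_def adults_fun_upd e_def[symmetric] by simp
  moreover have "F e = (if snd q = \<delta> (fst q) then pderiv_at G (adults \<delta> y) (fst q) else 0)"
    using \<open>linear F\<close> unfolding e_def F_def pderiv_at_def by (simp add: linear_0)
  ultimately show ?thesis by simp
qed

lemma has_real_derivative_birth_term:
  assumes "G i differentiable (at (adults \<delta> y))"
  shows "((\<lambda>t. G i (adults \<delta> (y(q := t))) * (y(q := t)) (i, \<delta> i)) has_real_derivative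
           (if snd q = \<delta> (fst q) then birth_partial \<delta> G y i (fst q) else 0)) (at (y q))"
proof -
  have "((\<lambda>t. G i (adults \<delta> (y(q := t))) * (y(q := t)) (i, \<delta> i)) has_real_derivative
          (if snd q = \<delta> (fst q) then pderiv_at (G i) (adults \<delta> y) (fst q) else 0) * (y(q := y q)) (i, \<delta> i)
          + (if q = (i, \<delta> i) then 1 else 0) * G i (adults \<delta> (y(q := y q)))) (at (y q))"
    by (rule DERIV_mult[OF has_real_derivative_G_adults[OF assms] has_real_derivative_fun_upd])
  then show ?thesis by (rule DERIV_cong) (cases q, auto simp: birth_partial_def mult.commute)
qed

lemma hmap_node:
  assumes "a \<le> \<delta> i"
  shows "hmap \<delta> \<sigma> G y (i, a) =
           (if 0 < a then \<sigma> i (a - 1) * y (i, a - 1) else 0)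
         + (if a = \<delta> i then \<sigma> i (\<delta> i) * y (i, \<delta> i) else 0)
         + (if a = 0 then G i (adults \<delta> y) * y (i, \<delta> i) else 0)"
  using assms by (auto simp: hmap_def)

lemma jacobian_hmap:
  assumes G_diff: "\<And>i x. G i differentiable (at x)" and a: "a \<le> \<delta> i"
  shows "jacobian \<delta> \<sigma> G y (i, a) q =
           (if 0 < a \<and> q = (i, a - 1) then \<sigma> i (a - 1) else 0)
         + (if a = \<delta> i \<and> q = (i, \<delta> i) then \<sigma> i (\<delta> i) else 0)
         + (if a = 0 \<and> snd q = \<delta> (fst q) then birth_partial \<delta> G y i (fst q) else 0)"
proof -
  have "((\<lambda>t. hmap \<delta> \<sigma> G (y(q := t)) (i, a)) has_real_derivative
          (if 0 < a then \<sigma> i (a - 1) * (if q = (i, a - 1) then 1 else 0) else 0)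
        + (if a = \<delta> i then \<sigma> i (\<delta> i) * (if q = (i, \<delta> i) then 1 else 0) else 0)
        + (if a = 0 then (if snd q = \<delta> (fst q) then birth_partial \<delta> G y i (fst q) else 0) else 0))
        (at (y q))"
    unfolding hmap_node[where \<delta> = \<delta> and i = i, OF a]
    by (intro DERIV_add has_real_derivative_if_const DERIV_cmult has_real_derivative_fun_upd
        has_real_derivative_birth_term G_diff)
  then show ?thesis unfolding jacobian_def by (auto dest!: DERIV_imp_deriv)
qed

lemma age_class_weights:
  fixes s :: "nat \<Rightarrow> real" and d :: nat and \<beta> :: real
  assumes s_pos: "\<And>k. k < d \<Longrightarrow> 0 < s k" and \<beta>: "0 \<le> \<beta>"
    and cond: "(\<Prod>k<d. s k) * \<beta> < 1 - s d"
  obtains W where "W d = 1" and "\<And>a. a \<le> d \<Longrightarrow> 0 < W a"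
    and "\<And>a. a \<le> d \<Longrightarrow>
           (if 0 < a then s (a - 1) * W (a - 1) else 0) + (if a = d then s d else 0)
           + (if a = 0 then \<beta> else 0) < W a"
proof (cases "d = 0")
  case True
  with cond that[of "\<lambda>_. 1"] show thesis by auto
next
  case False
  define P where "P a = (\<Prod>k<a. s k)" for a
  \<comment> \<open>half of the slack in \<open>cond\<close>, spread over the \<open>d\<close> juvenile steps\<close>
  define \<epsilon> where "\<epsilon> = (1 - s d - P d * \<beta>) / (2 * P d * d)"
  define W where "W a = (if a = d then 1 else P a * (\<beta> + (a + 1) * \<epsilon>))" for a
  have P_pos: "0 < P a" if "a \<le> d" for a
    unfolding P_def using s_pos that by (intro prod_pos) auto
  have P_Suc: "P (Suc a) = s a * P a" for a
    unfolding P_def by (simp add: prod.lessThan_Suc)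
  have "0 < \<epsilon>" unfolding \<epsilon>_def using cond False P_pos[of d] by (simp add: P_def)
  have W_pos: "0 < W a" if "a \<le> d" for a
    unfolding W_def using P_pos[OF that] \<open>0 < \<epsilon>\<close> \<beta> by (auto intro!: mult_pos_pos add_nonneg_pos)
  have "W d = 1" unfolding W_def by simp
  have step: "s (a - 1) * W (a - 1) = P a * (\<beta> + a * \<epsilon>)" if "0 < a" "a \<le> d" for a
    using that P_Suc[of "a - 1"] unfolding W_def by (simp add: of_nat_diff)
  have "(if 0 < a then s (a - 1) * W (a - 1) else 0) + (if a = d then s d else 0)
          + (if a = 0 then \<beta> else 0) < W a" if a: "a \<le> d" for a
  proof -
    consider "a = 0" | "0 < a" "a < d" | "a = d" using a False by linarith
    then show ?thesis
    proof cases
      case 1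
      then show ?thesis using False \<open>0 < \<epsilon>\<close> unfolding W_def P_def by simp
    next
      case 2
      then show ?thesis
        using step[of a] P_pos[of a] \<open>0 < \<epsilon>\<close> unfolding W_def by simp
    next
      case 3
      have "P d * (\<beta> + d * \<epsilon>) = P d * \<beta> + (1 - s d - P d * \<beta>) / 2"
        unfolding \<epsilon>_def using False P_pos[of d] by (simp add: field_simps)
      also have "\<dots> < 1 - s d" using cond unfolding P_def by (simp add: field_simps)
      finally show ?thesis using 3 False step[of d] \<open>W d = 1\<close> by simp
    qed
  qed
  then show thesis using that W_pos \<open>W d = 1\<close> by blast
qed

lemma sum_adult_nodes_le:
  fixes f :: "'m::finite \<Rightarrow> real" and S :: "('m \<times> nat) set"
  assumes fin: "finite S" and nonneg: "\<And>j. 0 \<le> f j"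
  shows "(\<Sum>q\<in>S. if snd q = \<delta> (fst q) then f (fst q) else 0) \<le> (\<Sum>j\<in>{j. \<exists>a. (j, a) \<in> S}. f j)"
proof -
  let ?A = "{q\<in>S. snd q = \<delta> (fst q)}"
  have "(\<Sum>q\<in>S. if snd q = \<delta> (fst q) then f (fst q) else 0) = (\<Sum>q\<in>?A. f (fst q))"
    using fin by (simp add: sum.inter_filter)
  also have "\<dots> = (\<Sum>j\<in>fst ` ?A. f j)"
    by (rule sum.reindex[symmetric, unfolded o_def]) (auto intro!: inj_onI simp: prod_eq_iff)
  also have "\<dots> \<le> (\<Sum>j\<in>{j. \<exists>a. (j, a) \<in> S}. f j)"
    using nonneg by (intro sum_mono2) force+
  finally show ?thesis .
qed

lemma jacobian_row_weighted_sum_le: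
  fixes wt :: "'m::finite \<times> nat \<Rightarrow> real"
  assumes G_diff: "\<And>i x. G i differentiable (at x)"
    and S: "S \<subseteq> nodes \<delta>" "finite S" and p: "(i, a) \<in> S"
    and wt_nonneg: "\<And>q. q \<in> nodes \<delta> \<Longrightarrow> 0 \<le> wt q" and wt_adult: "\<And>j. wt (j, \<delta> j) = 1"
  shows "(\<Sum>q\<in>S. \<bar>jacobian \<delta> \<sigma> G y (i, a) q\<bar> * wt q)
           \<le> (if 0 < a then \<bar>\<sigma> i (a - 1)\<bar> * wt (i, a - 1) else 0)
             + (if a = \<delta> i then \<bar>\<sigma> i (\<delta> i)\<bar> else 0)
             + (if a = 0 then (\<Sum>j\<in>{j. \<exists>b. (j, b) \<in> S}. \<bar>birth_partial \<delta> G y i j\<bar>) else 0)"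
proof -
  have a: "a \<le> \<delta> i" using S p unfolding nodes_def by auto
  define T1 where "T1 q = (if 0 < a \<and> q = (i, a - 1) then \<bar>\<sigma> i (a - 1)\<bar> * wt (i, a - 1) else 0)" for q
  define T2 where "T2 q = (if a = \<delta> i \<and> q = (i, \<delta> i) then \<bar>\<sigma> i (\<delta> i)\<bar> else 0)" for q
  define T3 where "T3 q = (if snd q = \<delta> (fst q) then \<bar>birth_partial \<delta> G y i (fst q)\<bar> else 0)" for q
  have entry: "\<bar>jacobian \<delta> \<sigma> G y (i, a) q\<bar> * wt q \<le> T1 q + T2 q + (if a = 0 then T3 q else 0)"
    if "q \<in> S" for q
  proof -
    define x1 where "x1 = (if 0 < a \<and> q = (i, a - 1) then \<sigma> i (a - 1) else 0)"
    define x2 where "x2 = (if a = \<delta> i \<and> q = (i, \<delta> i) then \<sigma> i (\<delta> i) else 0)"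
    define x3 where "x3 = (if a = 0 \<and> snd q = \<delta> (fst q) then birth_partial \<delta> G y i (fst q) else 0)"
    have "0 \<le> wt q" using that S(1) by (intro wt_nonneg) auto
    moreover have "\<bar>x1 + x2 + x3\<bar> \<le> \<bar>x1\<bar> + \<bar>x2\<bar> + \<bar>x3\<bar>"
      using abs_triangle_ineq[of "x1 + x2" x3] abs_triangle_ineq[of x1 x2] by linarith
    ultimately have "\<bar>x1 + x2 + x3\<bar> * wt q \<le> \<bar>x1\<bar> * wt q + \<bar>x2\<bar> * wt q + \<bar>x3\<bar> * wt q"
      by (metis distrib_right mult_right_mono)
    also have "\<dots> = T1 q + T2 q + (if a = 0 then T3 q else 0)"
      unfolding x1_def x2_def x3_def T1_def T2_def T3_def
      by (cases q) (auto simp: wt_adult, metis wt_adult mult_1_right)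
    finally show ?thesis
      unfolding jacobian_hmap[where \<delta> = \<delta> and i = i, OF G_diff a] x1_def x2_def x3_def .
  qed
  have "0 \<le> wt (i, a - 1)" using a by (intro wt_nonneg) (auto simp: nodes_def)
  then have "sum T1 S \<le> (if 0 < a then \<bar>\<sigma> i (a - 1)\<bar> * wt (i, a - 1) else 0)"
    unfolding T1_def using S(2) by (auto simp: sum.delta)
  moreover have "sum T2 S \<le> (if a = \<delta> i then \<bar>\<sigma> i (\<delta> i)\<bar> else 0)"
    unfolding T2_def using S(2) by (auto simp: sum.delta)
  moreover have "sum T3 S \<le> (\<Sum>j\<in>{j. \<exists>b. (j, b) \<in> S}. \<bar>birth_partial \<delta> G y i j\<bar>)"
    unfolding T3_def using S(2) by (intro sum_adult_nodes_le) auto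
  moreover have "(\<Sum>q\<in>S. \<bar>jacobian \<delta> \<sigma> G y (i, a) q\<bar> * wt q)
      \<le> sum T1 S + sum T2 S + (if a = 0 then sum T3 S else 0)"
  proof -
    have "(\<Sum>q\<in>S. \<bar>jacobian \<delta> \<sigma> G y (i, a) q\<bar> * wt q)
        \<le> (\<Sum>q\<in>S. T1 q + T2 q + (if a = 0 then T3 q else 0))"
      by (intro sum_mono entry)
    then show ?thesis by (cases "a = 0") (simp_all add: sum.distrib)
  qed
  ultimately show ?thesis by (smt (verit))
qed

lemma finite_nodes: "finite (nodes (\<delta> :: 'm::finite \<Rightarrow> nat))"
proof -
  have "nodes \<delta> \<subseteq> (\<Union>i. {i} \<times> {..\<delta> i})" unfolding nodes_def by auto
  then show ?thesis by (rule finite_subset) auto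
qed

lemma jacobian_block_eigenvalue_norm_less_one:
  fixes S :: "('m::finite \<times> nat) set"
  defines "D \<equiv> {i. \<exists>a. (i, a) \<in> S}"
  assumes sigma_imm: "\<And>i a. a < \<delta> i \<Longrightarrow> 0 < \<sigma> i a"
    and sigma_ad: "\<And>i. 0 \<le> \<sigma> i (\<delta> i)"
    and G_diff: "\<And>i x. G i differentiable (at x)"
    and S: "S \<subseteq> nodes \<delta>"
    and cond: "\<And>i. i \<in> D \<Longrightarrow>
      (\<Sum>j\<in>D. \<bar>birth_partial \<delta> G y i j\<bar>) * (\<Prod>a<\<delta> i. \<sigma> i a) < 1 - \<sigma> i (\<delta> i)"
    and ev: "is_eigenvalue_on S (jacobian \<delta> \<sigma> G y) c"
  shows "cmod c < 1"
proof -
  define B where "B i = (\<Sum>j\<in>D. \<bar>birth_partial \<delta> G y i j\<bar>)" for i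
  have "\<exists>W. W (\<delta> i) = 1 \<and> (\<forall>b\<le>\<delta> i. 0 < W b) \<and>
          (i \<in> D \<longrightarrow> (\<forall>a\<le>\<delta> i.
             (if 0 < a then \<sigma> i (a - 1) * W (a - 1) else 0) + (if a = \<delta> i then \<sigma> i (\<delta> i) else 0)
             + (if a = 0 then B i else 0) < W a))" for i
  proof (cases "i \<in> D")
    case True
    have "(\<Prod>a<\<delta> i. \<sigma> i a) * B i < 1 - \<sigma> i (\<delta> i)"
      using cond[OF True] unfolding B_def by (simp add: mult.commute)
    moreover have "0 \<le> B i" unfolding B_def by (simp add: sum_nonneg)
    ultimately obtain W where "W (\<delta> i) = 1" "\<And>a. a \<le> \<delta> i \<Longrightarrow> 0 < W a"
      "\<And>a. a \<le> \<delta> i \<Longrightarrow>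
           (if 0 < a then \<sigma> i (a - 1) * W (a - 1) else 0) + (if a = \<delta> i then \<sigma> i (\<delta> i) else 0)
           + (if a = 0 then B i else 0) < W a"
      using age_class_weights[of "\<delta> i" "\<sigma> i" "B i"] sigma_imm by blast
    then show ?thesis by blast
  qed (intro exI[of _ "\<lambda>_. 1"], simp)
  then obtain W where W_adult: "\<And>i. W i (\<delta> i) = 1"
    and W_pos: "\<And>i b. b \<le> \<delta> i \<Longrightarrow> 0 < W i b"
    and W_rows: "\<And>i a. i \<in> D \<Longrightarrow> a \<le> \<delta> i \<Longrightarrow>
           (if 0 < a then \<sigma> i (a - 1) * W i (a - 1) else 0) + (if a = \<delta> i then \<sigma> i (\<delta> i) else 0)
           + (if a = 0 then B i else 0) < W i a"
    by (metis choice)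
  define wt where "wt q = W (fst q) (snd q)" for q
  have wt_pos: "0 < wt q" if "q \<in> nodes \<delta>" for q
    using that W_pos unfolding wt_def nodes_def by auto
  show ?thesis
  proof (rule norm_eigenvalue_less_one_by_row_weights[OF _ ev])
    show "finite S" using finite_nodes S by (rule finite_subset[rotated])
    show "0 < wt p" if "p \<in> S" for p by (intro wt_pos subsetD[OF S that])
    show "(\<Sum>q\<in>S. \<bar>jacobian \<delta> \<sigma> G y p q\<bar> * wt q) < wt p" if p: "p \<in> S" for p
    proof -
      obtain i a where p_eq: "p = (i, a)" by fastforce
      have "i \<in> D" "a \<le> \<delta> i" using p S unfolding p_eq D_def nodes_def by auto
      have wt_nonneg: "0 \<le> wt q" if "q \<in> nodes \<delta>" for q using wt_pos[OF that] by simp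
      have wt_adult: "wt (j, \<delta> j) = 1" for j unfolding wt_def by (simp add: W_adult)
      have "(\<Sum>q\<in>S. \<bar>jacobian \<delta> \<sigma> G y (i, a) q\<bar> * wt q)
          \<le> (if 0 < a then \<bar>\<sigma> i (a - 1)\<bar> * wt (i, a - 1) else 0)
            + (if a = \<delta> i then \<bar>\<sigma> i (\<delta> i)\<bar> else 0) + (if a = 0 then B i else 0)"
        unfolding B_def D_def
        by (rule jacobian_row_weighted_sum_le[where G = G and \<delta> = \<delta> and wt = wt,
              OF G_diff S \<open>finite S\<close> p[unfolded p_eq] wt_nonneg wt_adult])
      also have "\<dots> = (if 0 < a then \<sigma> i (a - 1) * W i (a - 1) else 0)
            + (if a = \<delta> i then \<sigma> i (\<delta> i) else 0) + (if a = 0 then B i else 0)"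
      proof -
        have "0 < a \<Longrightarrow> 0 < \<sigma> i (a - 1)" using sigma_imm \<open>a \<le> \<delta> i\<close> by simp
        then show ?thesis using sigma_ad[of i] by (auto simp: wt_def)
      qed
      also have "\<dots> < wt (i, a)"
        using W_rows[OF \<open>i \<in> D\<close> \<open>a \<le> \<delta> i\<close>] unfolding wt_def by simp
      finally show ?thesis unfolding p_eq .
    qed
  qed
qed

lemma sum_abs_birth_partial:
  assumes "finite D" and "i \<in> D"
  shows "(\<Sum>j\<in>D. \<bar>birth_partial \<delta> G y i j\<bar>) =
           \<bar>G i (adults \<delta> y) + y (i, \<delta> i) * pderiv_at (G i) (adults \<delta> y) i\<bar>
           + (\<Sum>j\<in>D - {i}. \<bar>y (i, \<delta> i) * pderiv_at (G i) (adults \<delta> y) j\<bar>)"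
proof -
  have "(\<Sum>j\<in>D - {i}. \<bar>birth_partial \<delta> G y i j\<bar>) =
          (\<Sum>j\<in>D - {i}. \<bar>y (i, \<delta> i) * pderiv_at (G i) (adults \<delta> y) j\<bar>)"
    unfolding birth_partial_def by (intro sum.cong) auto
  then show ?thesis
    using sum.remove[OF assms, of "\<lambda>j. \<bar>birth_partial \<delta> G y i j\<bar>"]
    by (simp add: birth_partial_def add.commute)
qed

theorem theorem3:
  fixes \<delta> :: "'m::finite \<Rightarrow> nat"
    and \<sigma> :: "'m \<Rightarrow> nat \<Rightarrow> real"
    and G :: "'m \<Rightarrow> real ^ 'm \<Rightarrow> real"
    and ystar :: "'m \<times> nat \<Rightarrow> real"
    and r :: nat
    and \<alpha> :: "nat \<Rightarrow> ('m \<times> nat) set"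
  assumes sigma_imm: "\<And>i a. a < \<delta> i \<Longrightarrow> 0 < \<sigma> i a \<and> \<sigma> i a \<le> 1"
    and sigma_ad: "\<And>i. 0 < \<sigma> i (\<delta> i) \<and> \<sigma> i (\<delta> i) < 1"
    and G_diff: "\<And>i x. G i differentiable (at x)"
    and equil: "\<forall>p\<in>nodes \<delta>. hmap \<delta> \<sigma> G ystar p = ystar p"
    and interior: "\<And>i. ystar (i, \<delta> i) > 0"
    and part_ne: "\<forall>w<r. \<alpha> w \<noteq> {}"
    and part_disj: "\<forall>u<r. \<forall>w<r. u \<noteq> w \<longrightarrow> \<alpha> u \<inter> \<alpha> w = {}"
    and part_cover: "(\<Union>w<r. \<alpha> w) = nodes \<delta>"
    and lower_tri: "\<forall>u<r. \<forall>w<r. u < w \<longrightarrow>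
                      (\<forall>p\<in>\<alpha> u. \<forall>q\<in>\<alpha> w. jacobian \<delta> \<sigma> G ystar p q = 0)"
    and diag_blocks: "\<forall>w<r. irreducible_block (\<alpha> w) (jacobian \<delta> \<sigma> G ystar) \<or>
                      (\<exists>p. \<alpha> w = {p} \<and> jacobian \<delta> \<sigma> G ystar p p = 0)"
    and cond: "\<forall>w<r. \<forall>i\<in>{i. \<exists>a. (i, a) \<in> \<alpha> w}.
        (\<bar>G i (adults \<delta> ystar) + ystar (i, \<delta> i) * pderiv_at (G i) (adults \<delta> ystar) i\<bar>
          + (\<Sum>j\<in>{j. \<exists>a. (j, a) \<in> \<alpha> w} - {i}.
               \<bar>ystar (i, \<delta> i) * pderiv_at (G i) (adults \<delta> ystar) j\<bar>))
        * (\<Prod>a<\<delta> i. \<sigma> i a) < 1 - \<sigma> i (\<delta> i)"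
  shows "spectral_radius_on (nodes \<delta>) (jacobian \<delta> \<sigma> G ystar) < 1"
proof (rule spectral_radius_on_less[OF finite_nodes])
  show "nodes \<delta> \<noteq> {}" unfolding nodes_def by auto
  have tri: "jacobian \<delta> \<sigma> G ystar p q = 0"
    if "u < v" "v < r" "p \<in> \<alpha> u" "q \<in> \<alpha> v" for u v p q
    using lower_tri that by (meson order.strict_trans)
  fix c assume "is_eigenvalue_on (nodes \<delta>) (jacobian \<delta> \<sigma> G ystar) c"
  then obtain w where w: "w < r" and ev: "is_eigenvalue_on (\<alpha> w) (jacobian \<delta> \<sigma> G ystar) c"
    using is_eigenvalue_on_block_lower_triangular[where \<alpha> = \<alpha> and N = "nodes \<delta>" and r = r
        and A = "jacobian \<delta> \<sigma> G ystar"] finite_nodes part_cover tri by blast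
  show "cmod c < 1"
  proof (rule jacobian_block_eigenvalue_norm_less_one[where G = G, OF _ _ G_diff _ _ ev])
    show "\<alpha> w \<subseteq> nodes \<delta>" using part_cover w by auto
    show "0 < \<sigma> i a" if "a < \<delta> i" for i a using sigma_imm that by blast
    show "0 \<le> \<sigma> i (\<delta> i)" for i using sigma_ad[of i] by simp
    show "(\<Sum>j\<in>{i. \<exists>a. (i, a) \<in> \<alpha> w}. \<bar>birth_partial \<delta> G ystar i j\<bar>) * (\<Prod>a<\<delta> i. \<sigma> i a)
          < 1 - \<sigma> i (\<delta> i)" if "i \<in> {i. \<exists>a. (i, a) \<in> \<alpha> w}" for i
      using cond w that by (simp add: sum_abs_birth_partial)
  qed
qed

end
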